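(* Fix $m\ge1$, $n\ge0$ and $i\in Ag$. Every labelled sequent derivable in $\mathsf{G3Ldm}_{n}^{m}+\mathsf{PR}$ is derivable in $\mathsf{G3Ldm}_{n}^{m}+\mathsf{PR}$ without any use of the rule $(\mathsf{refl}_i)$.
   Context: Language. $Ag=\{1,\dots,m\}$, $Var$ a countable set of propositional variables; formulas $\phi ::= p \mid \overline{p} \mid (\phi\wedge\phi) \mid (\phi\vee\phi) \mid \Box\phi \mid \Diamond\phi \mid [i]\phi \mid \langle i\rangle\phi$. Labelled sequents $\mathcal{R},\Gamma$: $\mathcal{R}$ a multiset of relational atoms $\mathcal{R}_ixy$, $\Gamma$ a multiset of labelled formulas $x:\phi$. Derivations are finite trees whose leaves are $(\mathsf{id})$ instances. Rules of $\mathsf{G3Ldm}_{n}^{m}$ (premise(s) / conclusion): $(\mathsf{id})$: / $\mathcal{R}, w:p, w:\overline{p},\Gamma$. $(\wedge)$: $\mathcal{R}, w:\phi\wedge\psi, w:\phi,\Gamma$ and $\mathcal{R}, w:\phi\wedge\psi, w:\psi,\Gamma$ / $\mathcal{R}, w:\phi\wedge\psi,\Gamma$. $(\vee)$: $\mathcal{R}, w:\phi\vee\psi, w:\phi, w:\psi,\Gamma$ / $\mathcal{R}, w:\phi\vee\psi,\Gamma$. $([i])$: $\mathcal{R},\mathcal{R}_iwv, v:\phi,\Gamma$ / $\mathcal{R}, w:[i]\phi,\Gamma$ ($v$ fresh). $(\Box)$: $\mathcal{R}, w:\Box\phi, v:\phi,\Gamma$ / $\mathcal{R}, w:\Box\phi,\Gamma$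 ($v$ fresh). $(\Diamond)$: $\mathcal{R}, w:\Diamond\phi, u:\phi,\Gamma$ / $\mathcal{R}, w:\Diamond\phi,\Gamma$. $(\mathsf{IOA})$: $\mathcal{R},\mathcal{R}_1u_1v,\dots,\mathcal{R}_mu_mv,\Gamma$ / $\mathcal{R},\Gamma$ ($v$ fresh). $(\langle i\rangle)$: $\mathcal{R},\mathcal{R}_iwu, w:\langle i\rangle\phi, u:\phi,\Gamma$ / $\mathcal{R},\mathcal{R}_iwu, w:\langle i\rangle\phi,\Gamma$. $(\mathsf{refl}_i)$: $\mathcal{R},\mathcal{R}_iww,\Gamma$ / $\mathcal{R},\Gamma$. $(\mathsf{eucl}_i)$: $\mathcal{R},\mathcal{R}_iwu,\mathcal{R}_iwv,\mathcal{R}_iuv,\Gamma$ / $\mathcal{R},\mathcal{R}_iwu,\mathcal{R}_iwv,\Gamma$. $(\mathsf{APC}^i_n)$ (only if $n>0$): premises $\mathcal{R},\mathcal{R}_iw_kw_j,\Gamma$ for all $0\le k\le n-1$, $k+1\le j\le n$ / $\mathcal{R},\Gamma$. "Fresh" means not occurring in the conclusion. One copy of the indexed rules for each agent. $\mathsf{G3Ldm}_{n}^{m}+\mathsf{PR}$ adds, for each $i\in Ag$, the propagation rule $(\mathsf{Pr}_i)$: $\mathcal{R}, w:\langle i\rangle\phi, u:\phi,\Gamma$ / $\mathcal{R}, w:\langle i\rangle\phi,\Gamma$, applicable only if $w=u$ or there are labels $w=z_0,\dots,z_k=u$ ($k\ge1$) with $\mathcal{R}_iz_lz_{l+1}\in\mathcal{R}$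 or $\mathcal{R}_iz_{l+1}z_l\in\mathcal{R}$ for each $l<k$. *)

theory Defs
  imports "HOL-Library.Multiset"
begin

datatype fm =
    PVar nat
  | NVar nat
  | Conj fm fm
  | Disj fm fm
  | Box fm
  | Dia fm
  | Stit nat fm
  | DStit nat fm

type_synonym rel_atom = "nat \<times> nat \<times> nat"   \<comment> \<open>(i, x, y) stands for R_i x y\<close>
type_synonym lform = "nat \<times> fm"              \<comment> \<open>(x, phi) stands for x : phi\<close>

definition rlabels :: "rel_atom multiset \<Rightarrow> nat set" where
  "rlabels R = (\<Union>(i, x, y) \<in> set_mset R. {x, y})"

definition flabels :: "lform multiset \<Rightarrow> nat set" where
  "flabels G = fst ` set_mset G"

definition fresh :: "nat \<Rightarrow> rel_atom multiset \<Rightarrow> lform multiset \<Rightarrow> bool" where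
  "fresh v R G \<longleftrightarrow> v \<notin> rlabels R \<and> v \<notin> flabels G"

definition ipath :: "nat \<Rightarrow> rel_atom multiset \<Rightarrow> nat \<Rightarrow> nat \<Rightarrow> bool" where
  "ipath i R w u \<longleftrightarrow> (\<lambda>x y. (i, x, y) \<in># R \<or> (i, y, x) \<in># R)\<^sup>*\<^sup>* w u"

text \<open>Derivability in G3Ldm_n^m + PR; the parameter E is the set of agents i for which
  the rule (refl_i) is NOT available. E = {} gives the full calculus.\<close>
inductive der :: "nat \<Rightarrow> nat \<Rightarrow> nat set \<Rightarrow> rel_atom multiset \<Rightarrow> lform multiset \<Rightarrow> bool"
  for m :: nat and n :: nat and E :: "nat set" where
  id: "der m n E R (add_mset (w, PVar p) (add_mset (w, NVar p) G))"
| conj: "der m n E R (add_mset (w, Conj A B) (add_mset (w, A) G)) \<Longrightarrow>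
         der m n E R (add_mset (w, Conj A B) (add_mset (w, B) G)) \<Longrightarrow>
         der m n E R (add_mset (w, Conj A B) G)"
| disj: "der m n E R (add_mset (w, Disj A B) (add_mset (w, A) (add_mset (w, B) G))) \<Longrightarrow>
         der m n E R (add_mset (w, Disj A B) G)"
| stit: "i \<in> {1..m} \<Longrightarrow> fresh v R (add_mset (w, Stit i A) G) \<Longrightarrow>
         der m n E (add_mset (i, w, v) R) (add_mset (v, A) G) \<Longrightarrow>
         der m n E R (add_mset (w, Stit i A) G)"
| box: "fresh v R (add_mset (w, Box A) G) \<Longrightarrow>
        der m n E R (add_mset (w, Box A) (add_mset (v, A) G)) \<Longrightarrow>
        der m n E R (add_mset (w, Box A) G)"
| dia: "der m n E R (add_mset (w, Dia A) (add_mset (u, A) G)) \<Longrightarrow>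
        der m n E R (add_mset (w, Dia A) G)"
| ioa: "fresh v R G \<Longrightarrow>
        der m n E (R + image_mset (\<lambda>k. (k, us k, v)) (mset [1..<Suc m])) G \<Longrightarrow>
        der m n E R G"
| dstit: "i \<in> {1..m} \<Longrightarrow>
          der m n E (add_mset (i, w, u) R) (add_mset (w, DStit i A) (add_mset (u, A) G)) \<Longrightarrow>
          der m n E (add_mset (i, w, u) R) (add_mset (w, DStit i A) G)"
| refl: "i \<in> {1..m} \<Longrightarrow> i \<notin> E \<Longrightarrow>
         der m n E (add_mset (i, w, w) R) G \<Longrightarrow> der m n E R G"
| eucl: "i \<in> {1..m} \<Longrightarrow>
         der m n E (add_mset (i, w, u) (add_mset (i, w, v) (add_mset (i, u, v) R))) G \<Longrightarrow>
         der m n E (add_mset (i, w, u) (add_mset (i, w, v) R)) G"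
| apc: "n > 0 \<Longrightarrow> i \<in> {1..m} \<Longrightarrow>
        (\<And>k j. k \<le> n - 1 \<Longrightarrow> k + 1 \<le> j \<Longrightarrow> j \<le> n \<Longrightarrow>
           der m n E (add_mset (i, ws k, ws j) R) G) \<Longrightarrow>
        der m n E R G"
| pr: "i \<in> {1..m} \<Longrightarrow> ipath i R w u \<Longrightarrow>
       der m n E R (add_mset (w, DStit i A) (add_mset (u, A) G)) \<Longrightarrow>
       der m n E R (add_mset (w, DStit i A) G)"

end

theory Submission
  imports Defs
begin

text \<open>The side condition of \<open>(Pr\<^sub>i)\<close> only asks for an undirected \<open>R\<^sub>i\<close>-path, so for agent \<open>i\<close>
  the relational part of a sequent matters only up to its equivalence closure, which already
  contains every atom added by \<open>(refl\<^sub>i)\<close> or \<open>(eucl\<^sub>i)\<close>. We therefore transform a derivation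
  of \<open>R, \<Gamma>\<close> into one of \<open>R', \<Gamma>\<close> for any sub-multiset \<open>R'\<close> of \<open>R\<close> that keeps all atoms of the other
  agents and generates the same \<open>i\<close>-connectivity: \<open>(refl\<^sub>i)\<close> and \<open>(eucl\<^sub>i)\<close> steps are simply
  dropped, \<open>(\<langle>i\<rangle>)\<close> steps become \<open>(Pr\<^sub>i)\<close> steps, and freshness conditions survive because
  \<open>R'\<close> has no more labels than \<open>R\<close>.\<close>

lemma ipath_refl: "ipath i R x x"
  by (simp add: ipath_def)

lemma ipath_edge: "(i, x, y) \<in># R \<Longrightarrow> ipath i R x y"
  unfolding ipath_def by (rule r_into_rtranclp) simp

lemma ipath_sym: "ipath i R x y \<Longrightarrow> ipath i R y x"
  unfolding ipath_def by (rule sympD[OF symp_rtranclp]) (auto intro: sympI)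

lemma ipath_trans: "ipath i R x y \<Longrightarrow> ipath i R y z \<Longrightarrow> ipath i R x z"
  unfolding ipath_def by (rule rtranclp_trans)

lemma ipath_mono: "R \<subseteq># R' \<Longrightarrow> ipath i R x y \<Longrightarrow> ipath i R' x y"
  unfolding ipath_def
  by (erule rtranclp_mono[THEN predicate2D, rotated]) (auto dest: mset_subset_eqD)

lemma ipath_if_edges_connected:
  assumes edges: "\<And>x y. (i, x, y) \<in># R \<Longrightarrow> ipath i R' x y" and "ipath i R x y"
  shows "ipath i R' x y"
  using \<open>ipath i R x y\<close> unfolding ipath_def[of i R]
proof (induction rule: rtranclp_induct)
  case base
  then show ?case by (rule ipath_refl)
next
  case (step y z)
  then have "ipath i R' y z"
    using edges by (auto intro: ipath_sym)
  with step.IH show ?case by (rule ipath_trans)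
qed

lemma ipath_filter_other_agent:
  "j \<noteq> i \<Longrightarrow> ipath j (filter_mset (\<lambda>a. fst a \<noteq> i) R) x y = ipath j R x y"
  unfolding ipath_def by simp

lemma fresh_mono: "fresh v R G \<Longrightarrow> R' \<subseteq># R \<Longrightarrow> fresh v R' G"
  unfolding fresh_def rlabels_def by (auto dest: mset_subset_eqD)

definition reduct :: "nat \<Rightarrow> rel_atom multiset \<Rightarrow> rel_atom multiset \<Rightarrow> bool" where
  "reduct i R R' \<longleftrightarrow> R' \<subseteq># R \<and> filter_mset (\<lambda>a. fst a \<noteq> i) R \<subseteq># R'
     \<and> (\<forall>x y. (i, x, y) \<in># R \<longrightarrow> ipath i R' x y)"

lemma reduct_refl: "reduct i R R"
  unfolding reduct_def by (simp add: ipath_edge)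

lemma reduct_subset: "reduct i R R' \<Longrightarrow> R' \<subseteq># R"
  unfolding reduct_def by blast

lemma reduct_ipath:
  assumes "reduct i R R'" and "ipath j R x y"
  shows "ipath j R' x y"
proof (cases "j = i")
  case True
  with assms show ?thesis
    unfolding reduct_def by (blast intro: ipath_if_edges_connected)
next
  case False
  with assms have "ipath j (filter_mset (\<lambda>a. fst a \<noteq> i) R) x y"
    by (simp add: ipath_filter_other_agent)
  with assms show ?thesis
    unfolding reduct_def by (blast intro: ipath_mono)
qed

lemma reduct_other_agents:
  assumes "reduct i R R'" and "S \<subseteq># R" and "\<forall>a \<in># S. fst a \<noteq> i"
  shows "S \<subseteq># R'"
proof -
  have "S = filter_mset (\<lambda>a. True) S"
    by simp
  also have "\<dots> = filter_mset (\<lambda>a. fst a \<noteq> i) S"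
    using assms(3) by (blast intro: filter_mset_cong0)
  also have "\<dots> \<subseteq># filter_mset (\<lambda>a. fst a \<noteq> i) R"
    using assms(2) by (rule multiset_filter_mono)
  also have "\<dots> \<subseteq># R'"
    using assms(1) unfolding reduct_def by blast
  finally show ?thesis .
qed

lemma reduct_union: "reduct i R R' \<Longrightarrow> reduct i (R + S) (R' + S)"
  unfolding reduct_def
  by (auto intro: ipath_edge ipath_mono[of R' "R' + S"] simp: subset_mset.add_mono)

lemma reduct_add_mset: "reduct i R R' \<Longrightarrow> reduct i (add_mset a R) (add_mset a R')"
  using reduct_union[of i R R' "{#a#}"] by simp

lemma reduct_add_connected:
  assumes "reduct i R R'" and "ipath i R' x y"
  shows "reduct i (add_mset (i, x, y) R) R'"
  using assms unfolding reduct_def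
  by (auto intro: subset_mset.order_trans[of R' R] simp: subset_mset.le_add_same_cancel1)

lemma reduct_add_eucl:
  assumes "reduct i (add_mset (i, w, u) (add_mset (i, w, v) R)) R'"
  shows "reduct i (add_mset (i, w, u) (add_mset (i, w, v) (add_mset (i, u, v) R))) R'"
proof -
  have "ipath i R' w u" "ipath i R' w v"
    by (rule reduct_ipath[OF assms ipath_edge], simp)+
  then have "ipath i R' u v"
    by (meson ipath_sym ipath_trans)
  then show ?thesis
    using reduct_add_connected[OF assms] by (simp add: add_mset_commute)
qed

lemma der_reduct:
  assumes "der m n E R G" and "reduct i R R'"
  shows "der m n (insert i E) R' G"
  using assms
proof (induction arbitrary: R' rule: der.induct)
  case (id R w p G)
  show ?case by (rule der.id)
next
  case (conj R w A B G)
  show ?case by (rule der.conj[OF conj.IH(1,2)[OF conj.prems]])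
next
  case (disj R w A B G)
  show ?case by (rule der.disj[OF disj.IH[OF disj.prems]])
next
  case (stit j v R w A G)
  show ?case
    by (rule der.stit[OF stit.hyps(1) fresh_mono[OF stit.hyps(2) reduct_subset[OF stit.prems]]
          stit.IH[OF reduct_add_mset[OF stit.prems]]])
next
  case (box v R w A G)
  show ?case
    by (rule der.box[OF fresh_mono[OF box.hyps(1) reduct_subset[OF box.prems]] box.IH[OF box.prems]])
next
  case (dia R w A u G)
  show ?case by (rule der.dia[OF dia.IH[OF dia.prems]])
next
  case (ioa v R G us)
  show ?case
    by (rule der.ioa[OF fresh_mono[OF ioa.hyps(1) reduct_subset[OF ioa.prems]]
          ioa.IH[OF reduct_union[OF ioa.prems]]])
next
  case (dstit j w u R A G)
  show ?case
  proof (cases "j = i")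
    case True
    have "ipath j R' w u"
      by (rule reduct_ipath[OF dstit.prems ipath_edge]) simp
    then show ?thesis
      by (rule der.pr[OF dstit.hyps(1) _ dstit.IH[OF dstit.prems]])
  next
    case False
    then have "{#(j, w, u)#} \<subseteq># R'"
      by (intro reduct_other_agents[OF dstit.prems]) simp_all
    then obtain R0 where "R' = add_mset (j, w, u) R0"
      by (metis mset_subset_eq_exists_conv add_mset_add_single add.commute)
    then show ?thesis
      using dstit.prems by (simp add: der.dstit[OF dstit.hyps(1)] dstit.IH)
  qed
next
  case (refl j w R G)
  show ?case
  proof (cases "j = i")
    case True
    then show ?thesis
      using refl.IH reduct_add_connected[OF refl.prems ipath_refl] by simp
  next
    case False
    with refl.hyps(2) have "j \<notin> insert i E"
      by simp
    then show ?thesis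
      by (rule der.refl[OF refl.hyps(1) _ refl.IH[OF reduct_add_mset[OF refl.prems]]])
  qed
next
  case (eucl j w u v R G)
  show ?case
  proof (cases "j = i")
    case True
    then have "reduct i (add_mset (j, w, u) (add_mset (j, w, v) (add_mset (j, u, v) R))) R'"
      using reduct_add_eucl eucl.prems by simp
    then show ?thesis
      by (rule eucl.IH)
  next
    case False
    then have "{#(j, w, u), (j, w, v)#} \<subseteq># R'"
      by (intro reduct_other_agents[OF eucl.prems]) simp_all
    then obtain R0 where R0: "R' = add_mset (j, w, u) (add_mset (j, w, v) R0)"
      by (auto simp: mset_subset_eq_exists_conv)
    have "reduct i (add_mset (j, u, v) (add_mset (j, w, u) (add_mset (j, w, v) R)))
        (add_mset (j, u, v) R')"
      using eucl.prems by (rule reduct_add_mset)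
    then have "der m n (insert i E) (add_mset (j, w, u) (add_mset (j, w, v) (add_mset (j, u, v) R0))) G"
      using eucl.IH unfolding R0 by (simp add: add_mset_commute)
    then show ?thesis
      unfolding R0 by (rule der.eucl[OF eucl.hyps(1)])
  qed
next
  case (apc j ws R G)
  show ?case
    by (rule der.apc[OF apc.hyps(1,2) apc.IH[OF _ _ _ reduct_add_mset[OF apc.prems]]])
next
  case (pr j R w u A G)
  show ?case
    by (rule der.pr[OF pr.hyps(1) reduct_ipath[OF pr.prems pr.hyps(2)] pr.IH[OF pr.prems]])
qed

theorem lemma2:
  fixes m n i :: nat and R :: "rel_atom multiset" and G :: "lform multiset"
  assumes "m \<ge> 1" and "i \<in> {1..m}" and "der m n {} R G"
  shows "der m n {i} R G"
  using der_reduct[OF assms(3) reduct_refl] by simp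

end
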